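(* For any integer $n \ge 104$, any $L,\mu,\nu>0$ with $\kappa := L/\mu \ge 8n$, and any integer $K \ge \max\left\{\frac{\kappa^2}{n}, \kappa^{3/2}n^{1/2}\right\}$, there exist a $4$-dimensional function $F \in \mathcal{F}_{\text{PŁ}}\left(L,\mu,\frac{L}{\mu},\nu\right)$ (with $n$ components) and an initialization point $\mathbf{x}_0$ such that for any permutation-based SGD (i.e. any choice of permutations $\sigma_1,\dots,\sigma_K$) with any constant step size $\eta > 0$ started at $\mathbf{x}_0^1 = \mathbf{x}_0$, and any nonnegative weights $\alpha_1,\dots,\alpha_{K+1}$ (not all zero), the weighted average iterate $\hat{\mathbf{x}} = \frac{\sum_{k=1}^{K+1}\alpha_k\mathbf{x}_0^k}{\sum_{k=1}^{K+1}\alpha_k}$ satisfies $$F(\hat{\mathbf{x}}) - F^* = \Omega\left(\frac{L^2\nu^2}{\mu^3n^2K^2}\right).$$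
   Context: Finite-sum problem: $F(\mathbf{x}) = \frac1n\sum_{i=1}^n f_i(\mathbf{x})$ on $\mathbb{R}^d$, $F^* = \inf F > -\infty$. A differentiable $f$ satisfies the $\mu$-PŁ condition if $\frac12\|\nabla f(\mathbf{x})\|^2 \ge \mu(f(\mathbf{x}) - \inf f)$ for all $\mathbf{x}$. $\mathcal{F}_{\text{PŁ}}(L,\mu,\tau,\nu)$: all such $F$ with each $f_i$ $L$-smooth (i.e. $\|\nabla f_i(\mathbf{x})-\nabla f_i(\mathbf{y})\|\le L\|\mathbf{x}-\mathbf{y}\|$; convexity of $f_i$ is not required), $F$ satisfying the $\mu$-PŁ condition, and $\|\nabla f_i(\mathbf{x}) - \nabla F(\mathbf{x})\| \le \tau\|\nabla F(\mathbf{x})\| + \nu$ for all $i,\mathbf{x}$. Permutation-based SGD with constant step size $\eta$: at each epoch $k=1,\dots,K$ a permutation $\sigma_k$ of $[n]$ is chosen by an arbitrary rule, $\mathbf{x}_i^k = \mathbf{x}_{i-1}^k - \eta\nabla f_{\sigma_k(i)}(\mathbf{x}_{i-1}^k)$ for $i=1,\dots,n$, $\mathbf{x}_0^{k+1} = \mathbf{x}_n^k$. $\Omega(g)$ means at least a universal positive constant times $g$. *)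

theory Defs
  imports "HOL-Analysis.Analysis"
begin

text \<open>Component functions are indexed by 0..n-1; dimension 4 is the type real^4.\<close>

definition is_gradient :: "('a::real_inner \<Rightarrow> real) \<Rightarrow> ('a \<Rightarrow> 'a) \<Rightarrow> bool" where
  "is_gradient f g \<longleftrightarrow> (\<forall>x. (f has_derivative (\<lambda>h. g x \<bullet> h)) (at x))"

definition avg_fun :: "nat \<Rightarrow> (nat \<Rightarrow> 'a \<Rightarrow> real) \<Rightarrow> 'a \<Rightarrow> real" where
  "avg_fun n f x = (\<Sum>i<n. f i x) / real n"

definition avg_grad :: "nat \<Rightarrow> (nat \<Rightarrow> 'a \<Rightarrow> 'a::real_vector) \<Rightarrow> 'a \<Rightarrow> 'a" where
  "avg_grad n g x = (1 / real n) *\<^sub>R (\<Sum>i<n. g i x)"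

definition in_PL_class ::
  "nat \<Rightarrow> (nat \<Rightarrow> 'a::real_inner \<Rightarrow> real) \<Rightarrow> (nat \<Rightarrow> 'a \<Rightarrow> 'a) \<Rightarrow> real \<Rightarrow> real \<Rightarrow> real \<Rightarrow> real \<Rightarrow> bool" where
  "in_PL_class n f g L \<mu> \<tau> \<nu> \<longleftrightarrow>
     (\<forall>i<n. is_gradient (f i) (g i)) \<and>
     (\<forall>i<n. \<forall>x y. norm (g i x - g i y) \<le> L * norm (x - y)) \<and>
     bdd_below (range (avg_fun n f)) \<and>
     (\<forall>x. (1/2) * (norm (avg_grad n g x))\<^sup>2 \<ge> \<mu> * (avg_fun n f x - (INF y. avg_fun n f y))) \<and>
     (\<forall>i<n. \<forall>x. norm (g i x - avg_grad n g x) \<le> \<tau> * norm (avg_grad n g x) + \<nu>)"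

definition sgd_epoch :: "nat \<Rightarrow> (nat \<Rightarrow> 'a \<Rightarrow> 'a::real_vector) \<Rightarrow> real \<Rightarrow> (nat \<Rightarrow> nat) \<Rightarrow> 'a \<Rightarrow> 'a" where
  "sgd_epoch n g \<eta> p x = foldl (\<lambda>y i. y - \<eta> *\<^sub>R g (p i) y) x [0..<n]"

text \<open>sgd_start n g eta sigma x0 k = x_0^{k+1}, the start of epoch k+1 (epochs numbered from 1).\<close>
fun sgd_start :: "nat \<Rightarrow> (nat \<Rightarrow> 'a \<Rightarrow> 'a::real_vector) \<Rightarrow> real \<Rightarrow> (nat \<Rightarrow> nat \<Rightarrow> nat) \<Rightarrow> 'a \<Rightarrow> nat \<Rightarrow> 'a" where
  "sgd_start n g \<eta> \<sigma> x0 0 = x0"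
| "sgd_start n g \<eta> \<sigma> x0 (Suc k) = sgd_epoch n g \<eta> (\<sigma> (Suc k)) (sgd_start n g \<eta> \<sigma> x0 k)"

end

theory Submission
  imports Defs
begin

text \<open>Every component is a separable quadratic, so SGD acts on each of the four coordinates
  separately, as a scalar recursion driven by the chosen permutation. Each coordinate defeats one
  range of step sizes. For \<open>\<eta> \<le> 1 / (2 \<mu> n K)\<close> the first coordinate, of curvature \<open>\<mu>\<close>,
  keeps half of its initial value for \<open>K\<close> epochs; for \<open>\<eta> \<ge> 2 / L\<close> the fourth, of curvature \<open>L\<close>
  on an even number of components, does not contract at all. In between, coordinates 2 and 3 are
  made of components that either attract to \<open>\<nu> / r\<close>, repel from it (they are concave), or
  shrink towards 0, with \<open>m\<close> attracting/repelling pairs for moderate and a single pair for large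
  step sizes. An exchange argument shows that performing all attracting steps first and all
  repelling steps last is the worst order, and in that order an explicit positive level is
  never crossed downwards, because the shrinking steps in between are too weak. So, whatever the
  permutations and the step size, some coordinate of every epoch start, hence of every weighted
  average, stays above a level whose contribution to \<open>F - F\<^sup>*\<close> is of order
  \<open>L\<^sup>2 \<nu>\<^sup>2 / (\<mu>\<^sup>3 n\<^sup>2 K\<^sup>2)\<close>.\<close>

section \<open>Separable quadratics\<close>

definition sep_quad :: "('n::finite \<Rightarrow> real) \<Rightarrow> ('n \<Rightarrow> real) \<Rightarrow> real^'n \<Rightarrow> real" where
  "sep_quad a b x = (\<Sum>j\<in>UNIV. a j / 2 * (x$j)\<^sup>2 + b j * x$j)"

definition sep_quad_grad :: "('n::finite \<Rightarrow> real) \<Rightarrow> ('n \<Rightarrow> real) \<Rightarrow> real^'n \<Rightarrow> real^'n" where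
  "sep_quad_grad a b x = (\<chi> j. a j * x$j + b j)"

lemma is_gradient_sep_quad:
  fixes a b :: "'n::finite \<Rightarrow> real"
  shows "is_gradient (sep_quad a b) (sep_quad_grad a b)"
  unfolding is_gradient_def
proof
  fix x :: "real^'n"
  have "((\<lambda>x. \<Sum>j\<in>UNIV. a j / 2 * (x$j)\<^sup>2 + b j * x$j) has_derivative
        (\<lambda>h. \<Sum>j\<in>UNIV. a j / 2 * (2 * x$j * h$j) + b j * h$j)) (at x)"
    by (intro has_derivative_sum derivative_eq_intros)
      (auto intro: bounded_linear_imp_has_derivative[OF bounded_linear_vec_nth])
  moreover have "(\<lambda>h. \<Sum>j\<in>UNIV. a j / 2 * (2 * x$j * h$j) + b j * h$j) = (\<lambda>h. sep_quad_grad a b x \<bullet> h)"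
    by (auto simp: sep_quad_grad_def inner_vec_def algebra_simps intro!: sum.cong)
  ultimately show "(sep_quad a b has_derivative (\<lambda>h. sep_quad_grad a b x \<bullet> h)) (at x)"
    unfolding sep_quad_def[abs_def] by simp
qed

lemma sep_quad_sum:
  "(\<Sum>i\<in>I. sep_quad (A i) (B i) x) = sep_quad (\<lambda>j. \<Sum>i\<in>I. A i j) (\<lambda>j. \<Sum>i\<in>I. B i j) x"
  unfolding sep_quad_def sum.distrib sum_distrib_right sum_divide_distrib
  by (simp add: sum.swap[of _ I])

lemma sep_quad_scale: "c * sep_quad a b x = sep_quad (\<lambda>j. c * a j) (\<lambda>j. c * b j) x"
  unfolding sep_quad_def sum_distrib_left by (simp add: algebra_simps)

lemma avg_fun_sep_quad:
  "avg_fun n (\<lambda>i. sep_quad (A i) (B i)) x = sep_quad (avg_fun n A) (avg_fun n B) x"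
  using sep_quad_scale[of "1 / real n"] unfolding avg_fun_def sep_quad_sum by simp

lemma avg_grad_sep_quad:
  "avg_grad n (\<lambda>i. sep_quad_grad (A i) (B i)) x = sep_quad_grad (avg_fun n A) (avg_fun n B) x"
  by (simp add: vec_eq_iff avg_grad_def avg_fun_def sep_quad_grad_def sum.distrib
      sum_distrib_right add_divide_distrib)

lemma sep_quad_ge_coord:
  assumes "\<And>j. 0 \<le> a j"
  shows "a j / 2 * (x$j)\<^sup>2 \<le> sep_quad a (\<lambda>_. 0) x"
proof -
  have "a j / 2 * (x$j)\<^sup>2 \<le> (\<Sum>j\<in>UNIV. a j / 2 * (x$j)\<^sup>2)"
    by (rule member_le_sum) (use assms in auto)
  then show ?thesis by (simp add: sep_quad_def)
qed

lemma sep_quad_nonneg: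
  assumes "\<And>j. 0 \<le> a j"
  shows "0 \<le> sep_quad a (\<lambda>_. 0) x"
  unfolding sep_quad_def using assms by (intro sum_nonneg) auto

lemma INF_sep_quad:
  assumes "\<And>j. 0 \<le> a j"
  shows "(INF y. sep_quad a (\<lambda>_. 0) y) = 0"
proof (rule antisym)
  have "bdd_below (range (sep_quad a (\<lambda>_. 0)))"
    using sep_quad_nonneg[OF assms] by (intro bdd_belowI2)
  then show "(INF y. sep_quad a (\<lambda>_. 0) y) \<le> 0"
    using cINF_lower[of "sep_quad a (\<lambda>_. 0)" UNIV 0] by (simp add: sep_quad_def)
  show "0 \<le> (INF y. sep_quad a (\<lambda>_. 0) y)"
    using sep_quad_nonneg[OF assms] by (intro cINF_greatest) auto
qed

lemma norm_le_scaled_componentwise_cart: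
  fixes v w :: "real^'n"
  assumes "\<And>j. \<bar>v$j\<bar> \<le> c * \<bar>w$j\<bar>" "0 \<le> c"
  shows "norm v \<le> c * norm w"
proof -
  have "norm v \<le> norm (c *\<^sub>R w)"
    by (rule norm_le_componentwise_cart) (use assms in \<open>auto simp: abs_mult\<close>)
  then show ?thesis using assms by simp
qed

lemma sep_quad_grad_lipschitz:
  assumes "\<And>j. \<bar>a j\<bar> \<le> L"
  shows "norm (sep_quad_grad a b x - sep_quad_grad a b y) \<le> L * norm (x - y)"
proof (rule norm_le_scaled_componentwise_cart)
  show "\<bar>(sep_quad_grad a b x - sep_quad_grad a b y) $ j\<bar> \<le> L * \<bar>(x - y) $ j\<bar>" for j
    using mult_right_mono[OF assms[of j] abs_ge_zero[of "(x - y) $ j"]]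
    by (simp add: sep_quad_grad_def abs_mult flip: right_diff_distrib)
  show "0 \<le> L"
    using order_trans[OF abs_ge_zero assms] .
qed

lemma sep_quad_PL:
  assumes "\<And>j. \<mu> \<le> a j" "0 < \<mu>"
  shows "\<mu> * sep_quad a (\<lambda>_. 0) x \<le> 1/2 * (norm (sep_quad_grad a (\<lambda>_. 0) x))\<^sup>2"
proof -
  have "\<mu> * (a j / 2 * (x$j)\<^sup>2) \<le> 1/2 * (a j * x$j)\<^sup>2" for j
  proof -
    have "\<mu> * a j \<le> a j * a j"
      using assms(1)[of j] assms(2) by (intro mult_right_mono) auto
    from mult_right_mono[OF this zero_le_power2[of "x$j"]] show ?thesis
      by (simp add: power2_eq_square algebra_simps)
  qed
  moreover have "(norm (sep_quad_grad a (\<lambda>_. 0) x))\<^sup>2 = (\<Sum>j\<in>UNIV. (a j * x$j)\<^sup>2)"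
    by (simp add: sep_quad_grad_def norm_vec_def L2_set_def sum_nonneg)
  ultimately show ?thesis
    unfolding sep_quad_def by (simp add: sum_distrib_left sum_mono)
qed

lemma sep_quad_grad_deviation:
  assumes "\<And>j. \<mu> \<le> a j" "0 < \<mu>" "\<And>j. \<bar>a' j - a j\<bar> \<le> L" "norm (vec_lambda b') \<le> \<nu>"
  shows "norm (sep_quad_grad a' b' x - sep_quad_grad a (\<lambda>_. 0) x)
           \<le> L / \<mu> * norm (sep_quad_grad a (\<lambda>_. 0) x) + \<nu>"
proof -
  have L: "0 \<le> L"
    using order_trans[OF abs_ge_zero assms(3)] .
  have split: "sep_quad_grad a' b' x - sep_quad_grad a (\<lambda>_. 0) x
      = sep_quad_grad (\<lambda>j. a' j - a j) (\<lambda>_. 0) x + vec_lambda b'"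
    by (simp add: sep_quad_grad_def vec_eq_iff algebra_simps)
  have "norm (sep_quad_grad (\<lambda>j. a' j - a j) (\<lambda>_. 0) x) \<le> L / \<mu> * norm (sep_quad_grad a (\<lambda>_. 0) x)"
  proof (rule norm_le_scaled_componentwise_cart)
    fix j
    have "\<bar>a' j - a j\<bar> * \<bar>x$j\<bar> \<le> L * \<bar>x$j\<bar>"
      using assms(3) by (intro mult_right_mono) auto
    also have "\<dots> \<le> L / \<mu> * (a j * \<bar>x$j\<bar>)"
      using mult_right_mono[OF mult_left_mono[OF assms(1)[of j] L] abs_ge_zero[of "x$j"]] assms(2)
      by (simp add: field_simps)
    finally show "\<bar>sep_quad_grad (\<lambda>j. a' j - a j) (\<lambda>_. 0) x $ j\<bar>
        \<le> L / \<mu> * \<bar>sep_quad_grad a (\<lambda>_. 0) x $ j\<bar>"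
      using assms(1)[of j] assms(2) by (simp add: sep_quad_grad_def abs_mult)
  qed (use L assms(2) in simp)
  then show ?thesis
    unfolding split
    using norm_triangle_ineq[of "sep_quad_grad (\<lambda>j. a' j - a j) (\<lambda>_. 0) x" "vec_lambda b'"] assms(4)
    by linarith
qed

lemma in_PL_class_sep_quad:
  assumes "avg_fun n B = (\<lambda>_. 0)" and "0 < \<mu>" and "\<And>j. \<mu> \<le> avg_fun n A j"
    and "\<And>i j. i < n \<Longrightarrow> \<bar>A i j\<bar> \<le> L"
    and "\<And>i j. i < n \<Longrightarrow> \<bar>A i j - avg_fun n A j\<bar> \<le> L"
    and "\<And>i. i < n \<Longrightarrow> norm (vec_lambda (B i)) \<le> \<nu>"
  shows "in_PL_class n (\<lambda>i. sep_quad (A i) (B i)) (\<lambda>i. sep_quad_grad (A i) (B i)) L \<mu> (L / \<mu>) \<nu>"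
proof -
  have a_nonneg: "0 \<le> avg_fun n A j" for j
    using assms(2) assms(3)[of j] by linarith
  have F: "avg_fun n (\<lambda>i. sep_quad (A i) (B i)) = sep_quad (avg_fun n A) (\<lambda>_. 0)"
    using avg_fun_sep_quad[of n A B] assms(1) by auto
  have G: "avg_grad n (\<lambda>i. sep_quad_grad (A i) (B i)) = sep_quad_grad (avg_fun n A) (\<lambda>_. 0)"
    using avg_grad_sep_quad[of n A B] assms(1) by auto
  have "bdd_below (range (sep_quad (avg_fun n A) (\<lambda>_. 0)))"
    using sep_quad_nonneg[OF a_nonneg] by (intro bdd_belowI2)
  moreover have "norm (sep_quad_grad (A i) (B i) x - sep_quad_grad (A i) (B i) y) \<le> L * norm (x - y)"
    if "i < n" for i x y
    using that assms(4) by (intro sep_quad_grad_lipschitz) auto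
  moreover have "norm (sep_quad_grad (A i) (B i) x - sep_quad_grad (avg_fun n A) (\<lambda>_. 0) x)
      \<le> L / \<mu> * norm (sep_quad_grad (avg_fun n A) (\<lambda>_. 0) x) + \<nu>" if "i < n" for i x
    using that assms(2,3,5,6) by (intro sep_quad_grad_deviation) auto
  ultimately show ?thesis
    unfolding in_PL_class_def F G INF_sep_quad[OF a_nonneg]
    using is_gradient_sep_quad sep_quad_PL[OF assms(3,2)] by auto
qed

section \<open>SGD on separable quadratics\<close>

definition sgd_step :: "real \<Rightarrow> real \<Rightarrow> real \<Rightarrow> real \<Rightarrow> real" where
  "sgd_step \<eta> a b t = t - \<eta> * (a * t + b)"

lemma foldl_sgd_sep_quad_nth:
  "foldl (\<lambda>y i. y - \<eta> *\<^sub>R sep_quad_grad (A i) (B i) y) x xs $ j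
     = foldl (\<lambda>t i. sgd_step \<eta> (A i j) (B i j) t) (x $ j) xs"
  by (induction xs arbitrary: x) (simp_all add: sep_quad_grad_def sgd_step_def)

lemma sgd_epoch_sep_quad_nth:
  "sgd_epoch n (\<lambda>i. sep_quad_grad (A i) (B i)) \<eta> p x $ j
     = foldl (\<lambda>t i. sgd_step \<eta> (A i j) (B i j) t) (x $ j) (map p [0..<n])"
  unfolding sgd_epoch_def foldl_map
  using foldl_sgd_sep_quad_nth[of \<eta> "\<lambda>i. A (p i)" "\<lambda>i. B (p i)"] by simp

lemma foldl_sgd_step_unshifted:
  "foldl (\<lambda>t i. sgd_step \<eta> (if P i then c else 0) 0 t) t xs = (1 - \<eta> * c) ^ length (filter P xs) * t"
  by (induction xs arbitrary: t) (simp_all add: sgd_step_def algebra_simps)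

lemma length_filter_permutes:
  assumes "p permutes {0..<n}"
  shows "length (filter P (map p [0..<n])) = card {i. i < n \<and> P i}"
proof -
  have "distinct (map p [0..<n])"
    using permutes_inj_on[OF assms] by (simp add: distinct_map)
  moreover have "set (map p [0..<n]) = {0..<n}"
    using assms by (simp add: permutes_image)
  ultimately show ?thesis
    using distinct_length_filter[of "map p [0..<n]" P]
    by (simp add: Int_def conj_commute atLeast0LessThan del: length_filter_map)
qed

lemma sgd_start_invariant:
  assumes "P x0" and "\<And>k x. k < K \<Longrightarrow> P x \<Longrightarrow> P (sgd_epoch n g \<eta> (\<sigma> (Suc k)) x)"
  shows "k \<le> K \<Longrightarrow> P (sgd_start n g \<eta> \<sigma> x0 k)"
  by (induction k) (use assms in auto)

lemma sgd_start_nth_geometric: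
  fixes q :: real and x0 :: "real^'n"
  assumes "\<And>k x. k < K \<Longrightarrow> sgd_epoch n g \<eta> (\<sigma> (Suc k)) x $ j = q * x $ j"
  shows "k \<le> K \<Longrightarrow> sgd_start n g \<eta> \<sigma> x0 k $ j = q ^ k * x0 $ j"
  by (induction k) (use assms in \<open>auto simp: mult.assoc\<close>)

section \<open>Attracting, shrinking and repelling steps\<close>

text \<open>The role of a component on one coordinate: \<open>Attract\<close> is \<open>r/2 t\<^sup>2 - \<nu> t\<close>, whose gradient
  steps pull towards \<open>\<nu> / r\<close>; \<open>Repel\<close> is its negative, pushing away from \<open>\<nu> / r\<close>; \<open>Shrink\<close> is
  \<open>z/2 t\<^sup>2\<close>, pulling towards 0.\<close>
datatype move = Attract | Shrink | Repel

definition move_count :: "nat \<Rightarrow> (nat \<Rightarrow> move) \<Rightarrow> move \<Rightarrow> nat" where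
  "move_count n mv M = card {i. i < n \<and> mv i = M}"

lemma sum_by_move:
  fixes h :: "move \<Rightarrow> real"
  shows "(\<Sum>i<n. h (mv i)) = h Attract * move_count n mv Attract + h Shrink * move_count n mv Shrink
     + h Repel * move_count n mv Repel"
proof -
  have "h (mv i) = h Attract * of_bool (mv i = Attract) + h Shrink * of_bool (mv i = Shrink)
      + h Repel * of_bool (mv i = Repel)" for i
    by (cases "mv i") simp_all
  then show ?thesis
    unfolding move_count_def by (simp add: sum.distrib Int_def lessThan_def)
qed

lemma funpow_commute_le:
  fixes f g :: "'a::order \<Rightarrow> 'a"
  assumes "mono g" and "\<And>y. f (g y) \<le> g (f y)"
  shows "f ((g ^^ k) y) \<le> (g ^^ k) (f y)"
proof (induction k)
  case (Suc k)
  have "f ((g ^^ Suc k) y) \<le> g (f ((g ^^ k) y))"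
    using assms(2) by simp
  also have "\<dots> \<le> (g ^^ Suc k) (f y)"
    using monoD[OF assms(1) Suc.IH] by simp
  finally show ?case .
qed simp

text \<open>An exchange argument: the first map of the list is commuted to its place in the order
  attract, shrink, repel, and each such swap can only decrease the result.\<close>
lemma foldl_ge_sorted_moves:
  fixes u s d :: "'a::order \<Rightarrow> 'a" and step :: "'i \<Rightarrow> 'a \<Rightarrow> 'a" and mv :: "'i \<Rightarrow> move"
  assumes mono: "mono u" "mono s" "mono d"
    and swap: "\<And>y. s (u y) \<le> u (s y)" "\<And>y. d (s y) \<le> s (d y)" "\<And>y. d (u y) \<le> u (d y)"
    and step: "\<And>i. i \<in> set xs \<Longrightarrow> step i = (case mv i of Attract \<Rightarrow> u | Shrink \<Rightarrow> s | Repel \<Rightarrow> d)"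
  shows "(d ^^ length (filter (\<lambda>i. mv i = Repel) xs))
           ((s ^^ length (filter (\<lambda>i. mv i = Shrink) xs))
             ((u ^^ length (filter (\<lambda>i. mv i = Attract) xs)) t))
         \<le> foldl (\<lambda>t i. step i t) t xs"
  using step
proof (induction xs arbitrary: t)
  case (Cons i xs)
  let ?c = "\<lambda>M. length (filter (\<lambda>i. mv i = M) xs)"
  let ?W = "\<lambda>t. (d ^^ ?c Repel) ((s ^^ ?c Shrink) ((u ^^ ?c Attract) t))"
  have IH: "?W t' \<le> foldl (\<lambda>t i. step i t) t' xs" for t'
    using Cons by simp
  show ?case
  proof (cases "mv i")
    case Attract
    then show ?thesis using IH[of "u t"] Cons.prems by (simp add: funpow_Suc_right del: funpow.simps)
  next
    case Shrink
    have "s ((u ^^ ?c Attract) t) \<le> (u ^^ ?c Attract) (s t)"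
      using funpow_commute_le[where f = s, OF mono(1) swap(1)] .
    then have "(d ^^ ?c Repel) ((s ^^ Suc (?c Shrink)) ((u ^^ ?c Attract) t)) \<le> ?W (s t)"
      using mono by (simp add: funpow_Suc_right funpow_mono mono_pow del: funpow.simps)
    then show ?thesis using IH[of "s t"] Cons.prems Shrink by simp
  next
    case Repel
    have "d ((s ^^ ?c Shrink) ((u ^^ ?c Attract) t)) \<le> (s ^^ ?c Shrink) (d ((u ^^ ?c Attract) t))"
      using funpow_commute_le[where f = d, OF mono(2) swap(2)] .
    also have "\<dots> \<le> (s ^^ ?c Shrink) ((u ^^ ?c Attract) (d t))"
      using funpow_commute_le[where f = d, OF mono(1) swap(3)] by (intro funpow_mono mono)
    finally have "(d ^^ Suc (?c Repel)) ((s ^^ ?c Shrink) ((u ^^ ?c Attract) t)) \<le> ?W (d t)"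
      using mono by (simp add: funpow_Suc_right funpow_mono del: funpow.simps)
    then show ?thesis using IH[of "d t"] Cons.prems Repel by simp
  qed
qed simp

lemma sgd_step_swap:
  "sgd_step \<eta> a b (sgd_step \<eta> a' b' y) = sgd_step \<eta> a' b' (sgd_step \<eta> a b y) + \<eta>\<^sup>2 * (a * b' - a' * b)"
  by (simp add: sgd_step_def power2_eq_square algebra_simps)

lemma mono_sgd_step:
  assumes "\<eta> * a \<le> 1"
  shows "mono (sgd_step \<eta> a b)"
proof (rule monoI)
  fix x y :: real
  assume "x \<le> y"
  then have "(1 - \<eta> * a) * x \<le> (1 - \<eta> * a) * y"
    using assms by (intro mult_left_mono) auto
  then show "sgd_step \<eta> a b x \<le> sgd_step \<eta> a b y"
    by (simp add: sgd_step_def algebra_simps)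
qed

lemma sgd_step_funpow:
  assumes "a \<noteq> 0 \<or> b = 0"
  shows "(sgd_step \<eta> a b ^^ k) t = - b / a + (1 - \<eta> * a) ^ k * (t + b / a)"
proof (induction k)
  case (Suc k)
  have "(sgd_step \<eta> a b ^^ Suc k) t = sgd_step \<eta> a b (- b / a + (1 - \<eta> * a) ^ k * (t + b / a))"
    using Suc.IH by simp
  also have "\<dots> = - b / a + (1 - \<eta> * a) ^ Suc k * (t + b / a)"
    using assms by (cases "a = 0") (simp_all add: sgd_step_def field_simps)
  finally show ?case .
qed simp

fun move_curvature :: "real \<Rightarrow> real \<Rightarrow> move \<Rightarrow> real" where
  "move_curvature r z Attract = r"
| "move_curvature r z Shrink = z"
| "move_curvature r z Repel = - r"

fun move_shift :: "real \<Rightarrow> move \<Rightarrow> real" where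
  "move_shift \<nu> Attract = - \<nu>"
| "move_shift \<nu> Shrink = 0"
| "move_shift \<nu> Repel = \<nu>"

lemma sum_move_curvature:
  assumes "move_count n mv Repel = move_count n mv Attract"
  shows "(\<Sum>i<n. move_curvature r z (mv i)) = z * move_count n mv Shrink"
  using assms sum_by_move[of "move_curvature r z" mv n] by simp

lemma sum_move_shift:
  assumes "move_count n mv Repel = move_count n mv Attract"
  shows "(\<Sum>i<n. move_shift \<nu> (mv i)) = 0"
  using assms sum_by_move[of "move_shift \<nu>" mv n] by simp

definition attract_shrink_repel :: "real \<Rightarrow> real \<Rightarrow> real \<Rightarrow> real \<Rightarrow> nat \<Rightarrow> nat \<Rightarrow> real \<Rightarrow> real" where
  "attract_shrink_repel \<eta> r z \<nu> m w t =
     (sgd_step \<eta> (- r) \<nu> ^^ m) ((sgd_step \<eta> z 0 ^^ w) ((sgd_step \<eta> r (- \<nu>) ^^ m) t))"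

lemma mono_move_steps:
  assumes "0 \<le> \<eta>" "0 \<le> r" "\<eta> * r \<le> 1" "\<eta> * z \<le> 1"
  shows "mono (sgd_step \<eta> r (- \<nu>))" "mono (sgd_step \<eta> z 0)" "mono (sgd_step \<eta> (- r) \<nu>)"
proof -
  have "\<eta> * - r \<le> 1"
    using mult_nonneg_nonneg[OF assms(1,2)] by simp
  then show "mono (sgd_step \<eta> r (- \<nu>))" "mono (sgd_step \<eta> z 0)" "mono (sgd_step \<eta> (- r) \<nu>)"
    using assms(3,4) by (simp_all only: mono_sgd_step)
qed

lemma mono_attract_shrink_repel:
  assumes "0 \<le> \<eta>" "0 \<le> r" "\<eta> * r \<le> 1" "\<eta> * z \<le> 1"
  shows "mono (attract_shrink_repel \<eta> r z \<nu> m w)"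
proof (rule monoI)
  fix x y :: real
  assume "x \<le> y"
  then show "attract_shrink_repel \<eta> r z \<nu> m w x \<le> attract_shrink_repel \<eta> r z \<nu> m w y"
    unfolding attract_shrink_repel_def using mono_move_steps[OF assms] by (intro funpow_mono)
qed

lemma sgd_epoch_move_nth_ge:
  assumes p: "p permutes {0..<n}"
    and coeffs: "\<And>i. i < n \<Longrightarrow> A i j = move_curvature r z (mv i) \<and> B i j = move_shift \<nu> (mv i)"
    and step_size: "0 \<le> \<eta>" "0 \<le> r" "\<eta> * r \<le> 1" "\<eta> * z \<le> 1"
    and shrink_nonneg: "0 \<le> z * \<nu>"
    and balanced: "move_count n mv Repel = move_count n mv Attract"
  shows "attract_shrink_repel \<eta> r z \<nu> (move_count n mv Attract) (move_count n mv Shrink) (x $ j)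
           \<le> sgd_epoch n (\<lambda>i. sep_quad_grad (A i) (B i)) \<eta> p x $ j"
proof -
  let ?u = "sgd_step \<eta> r (- \<nu>)" and ?s = "sgd_step \<eta> z 0" and ?d = "sgd_step \<eta> (- r) \<nu>"
  have "0 \<le> \<eta>\<^sup>2 * (z * \<nu>)"
    using mult_nonneg_nonneg[OF zero_le_power2 shrink_nonneg] .
  then have swap: "?s (?u y) \<le> ?u (?s y)" "?d (?s y) \<le> ?s (?d y)" "?d (?u y) \<le> ?u (?d y)" for y
    using sgd_step_swap[of \<eta> z 0 r "- \<nu>" y] sgd_step_swap[of \<eta> "- r" \<nu> z 0 y]
      sgd_step_swap[of \<eta> "- r" \<nu> r "- \<nu>" y]
    by (simp_all add: algebra_simps)
  have step: "sgd_step \<eta> (A i j) (B i j) = (case mv i of Attract \<Rightarrow> ?u | Shrink \<Rightarrow> ?s | Repel \<Rightarrow> ?d)"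
    if "i \<in> set (map p [0..<n])" for i
  proof -
    have "i < n"
      using that permutes_image[OF p] by simp
    then show ?thesis using coeffs by (cases "mv i") auto
  qed
  have counts: "length (filter (\<lambda>i. mv i = M) (map p [0..<n])) = move_count n mv M" for M
    unfolding move_count_def by (rule length_filter_permutes[OF p])
  have "(?d ^^ length (filter (\<lambda>i. mv i = Repel) (map p [0..<n])))
          ((?s ^^ length (filter (\<lambda>i. mv i = Shrink) (map p [0..<n])))
            ((?u ^^ length (filter (\<lambda>i. mv i = Attract) (map p [0..<n]))) (x $ j)))
        \<le> foldl (\<lambda>t i. sgd_step \<eta> (A i j) (B i j) t) (x $ j) (map p [0..<n])"
    by (rule foldl_ge_sorted_moves[OF mono_move_steps[OF step_size] swap step])
  then show ?thesis
    unfolding sgd_epoch_sep_quad_nth attract_shrink_repel_def counts balanced .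
qed

lemma attract_shrink_repel_diff:
  assumes "r \<noteq> 0"
  shows "attract_shrink_repel \<eta> r z \<nu> m w t - t
    = \<nu> / r * ((1 - (1 - (\<eta> * r)\<^sup>2) ^ m) - (1 - (1 - \<eta> * z) ^ w) * ((1 + \<eta> * r) ^ m - (1 - (\<eta> * r)\<^sup>2) ^ m))
      - t * (1 - (1 - \<eta> * z) ^ w * (1 - (\<eta> * r)\<^sup>2) ^ m)"
proof -
  define c X Y Q where "c = \<nu> / r" and "X = (1 - \<eta> * r) ^ m" and "Y = (1 + \<eta> * r) ^ m"
    and "Q = (1 - \<eta> * z) ^ w"
  have S: "(1 - (\<eta> * r)\<^sup>2) ^ m = X * Y"
    unfolding X_def Y_def by (simp add: power2_eq_square algebra_simps flip: power_mult_distrib)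
  have "attract_shrink_repel \<eta> r z \<nu> m w t = c + Y * (Q * (c + X * (t - c)) - c)"
    unfolding attract_shrink_repel_def using assms
    by (simp add: sgd_step_funpow c_def X_def Y_def Q_def)
  then show ?thesis
    unfolding S by (simp add: c_def X_def Y_def Q_def algebra_simps)
qed

text \<open>Up to the factor \<open>\<nu> / r\<close>, the net upward drift of \<open>m\<close> attracting and \<open>m\<close> repelling
  steps of size \<open>a = \<eta> r\<close> when the shrinking steps in between remove at most half of \<open>a\<close>.\<close>
definition drift_margin :: "real \<Rightarrow> nat \<Rightarrow> real" where
  "drift_margin a m = (1 - (1 - a\<^sup>2) ^ m) - a / 2 * ((1 + a) ^ m - (1 - a\<^sup>2) ^ m)"

lemma attract_shrink_repel_ge:
  assumes r: "0 < r" and \<nu>: "0 \<le> \<nu>" and \<eta>: "0 \<le> \<eta>" "\<eta> * r \<le> 1" and z: "0 \<le> \<eta> * z" "\<eta> * z \<le> 1"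
    and shrink_small: "real w * (\<eta> * z) \<le> \<eta> * r / 2"
    and margin: "real m * (\<eta> * r)\<^sup>2 / 4 \<le> drift_margin (\<eta> * r) m"
    and level: "0 \<le> l" "l * (real w * (\<eta> * z) + real m * (\<eta> * r)\<^sup>2) \<le> \<nu> / r * (real m * (\<eta> * r)\<^sup>2 / 4)"
  shows "l \<le> attract_shrink_repel \<eta> r z \<nu> m w l"
proof -
  define a e S Y Q where "a = \<eta> * r" and "e = real w * (\<eta> * z)" and "S = (1 - a\<^sup>2) ^ m"
    and "Y = (1 + a) ^ m" and "Q = (1 - \<eta> * z) ^ w"
  have a: "0 \<le> a" "a\<^sup>2 \<le> 1"
    using \<eta> r by (simp_all add: a_def power_le_one)
  have Q: "1 - e \<le> Q" "Q \<le> 1" "0 \<le> Q"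
    using Bernoulli_inequality[of "- (\<eta> * z)" w] z by (simp_all add: Q_def e_def power_le_one)
  have S: "1 - real m * a\<^sup>2 \<le> S" "S \<le> 1" "0 \<le> S"
    using Bernoulli_inequality[of "- a\<^sup>2" m] a by (simp_all add: S_def power_le_one)
  have "1 \<le> Y"
    unfolding Y_def using a(1) by (intro one_le_power) simp
  with S(2) have "S \<le> Y" by linarith
  then have "(1 - Q) * (Y - S) \<le> a / 2 * (Y - S)"
    using Q(1) shrink_small by (intro mult_right_mono) (simp_all add: a_def e_def)
  then have drift: "real m * a\<^sup>2 / 4 \<le> (1 - S) - (1 - Q) * (Y - S)"
    using margin unfolding drift_margin_def a_def[symmetric] S_def[symmetric] Y_def[symmetric] by linarith
  have "1 - Q * S = (1 - Q) + Q * (1 - S)"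
    by (simp add: algebra_simps)
  also have "\<dots> \<le> e + real m * a\<^sup>2"
    using Q S mult_left_le_one_le[of "1 - S" Q] by simp
  finally have "l * (1 - Q * S) \<le> l * (e + real m * a\<^sup>2)"
    using level(1) by (rule mult_left_mono)
  also have "\<dots> \<le> \<nu> / r * (real m * a\<^sup>2 / 4)"
    using level(2) unfolding a_def e_def .
  also have "\<dots> \<le> \<nu> / r * ((1 - S) - (1 - Q) * (Y - S))"
    using drift r \<nu> by (intro mult_left_mono) auto
  finally have "l * (1 - Q * S) \<le> \<nu> / r * ((1 - S) - (1 - Q) * (Y - S))" .
  then show ?thesis
    using attract_shrink_repel_diff[of r \<eta> z \<nu> m w l] r
    unfolding S_def Y_def Q_def a_def by simp
qed

lemma one_minus_power_le:
  fixes x :: real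
  assumes "0 \<le> x" "x \<le> 1"
  shows "(1 - x) ^ m \<le> 1 - real m * x + (real m * x)\<^sup>2 / 2"
proof (induction m)
  case (Suc m)
  have "(1 - x) ^ Suc m \<le> (1 - x) * (1 - real m * x + (real m * x)\<^sup>2 / 2)"
    using Suc assms by (simp add: mult_left_mono)
  also have "\<dots> = 1 - real (Suc m) * x + (real (Suc m) * x)\<^sup>2 / 2 - (x\<^sup>2 / 2 + (real m * x)\<^sup>2 * x / 2)"
    by (simp add: field_simps power2_eq_square)
  also have "\<dots> \<le> 1 - real (Suc m) * x + (real (Suc m) * x)\<^sup>2 / 2"
  proof -
    have "0 \<le> (real m * x)\<^sup>2 * x" using assms(1) by simp
    then show ?thesis using zero_le_power2[of x] by linarith
  qed
  finally show ?case .
qed simp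

lemma one_plus_power_le:
  fixes a :: real
  assumes "0 \<le> a" "real m * a \<le> 1"
  shows "(1 + a) ^ m \<le> 1 + real m * a + (real m * a)\<^sup>2"
  using assms(2)
proof (induction m)
  case (Suc m)
  have ma: "real m * a \<le> 1"
    using Suc.prems assms(1) by (simp add: algebra_simps)
  have "(1 + a) ^ Suc m \<le> (1 + a) * (1 + real m * a + (real m * a)\<^sup>2)"
    using Suc.IH[OF ma] assms(1) by (simp add: mult_left_mono)
  also have "\<dots> = 1 + real (Suc m) * a + (real (Suc m) * a)\<^sup>2 - a\<^sup>2 * (real m + 1 - real m * (real m * a))"
    by (simp add: algebra_simps power2_eq_square)
  also have "\<dots> \<le> 1 + real (Suc m) * a + (real (Suc m) * a)\<^sup>2"
    using mult_left_mono[OF ma, of "real m"] by simp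
  finally show ?case .
qed simp

lemma drift_margin_many_steps:
  assumes "0 \<le> a" "1 \<le> m" "real m * a \<le> 1/10"
  shows "real m * a\<^sup>2 / 4 \<le> drift_margin a m"
proof -
  define M where "M = real m"
  have "a \<le> 1/10"
    using assms mult_right_mono[of 1 M a] by (simp add: M_def)
  have Ma: "0 \<le> M * a" "M * a \<le> 1/10"
    using assms by (simp_all add: M_def)
  have s1: "M * a\<^sup>2 \<le> M * a / 10"
    using mult_left_mono[OF \<open>a \<le> 1/10\<close> Ma(1)] by (simp add: power2_eq_square mult.assoc)
  have s2: "(M * a)\<^sup>2 \<le> M * a / 10"
    using mult_left_mono[OF Ma(2,1)] by (simp add: power2_eq_square)
  have "0 \<le> M * a\<^sup>2" "M * a\<^sup>2 \<le> 1/100"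
    using s1 Ma by (simp_all add: M_def)
  then have s3: "(M * a\<^sup>2)\<^sup>2 \<le> M * a\<^sup>2 / 100"
    using mult_left_mono[of "M * a\<^sup>2" "1/100" "M * a\<^sup>2"] by (simp add: power2_eq_square)
  note small = s1 s2 s3
  have S: "1 - M * a\<^sup>2 \<le> (1 - a\<^sup>2) ^ m" "(1 - a\<^sup>2) ^ m \<le> 1 - M * a\<^sup>2 + (M * a\<^sup>2)\<^sup>2 / 2"
    using Bernoulli_inequality[of "- a\<^sup>2" m] one_minus_power_le[of "a\<^sup>2" m] \<open>a \<le> 1/10\<close> assms(1)
    by (simp_all add: M_def power_le_one)
  have Y: "(1 + a) ^ m \<le> 1 + M * a + (M * a)\<^sup>2"
    using one_plus_power_le[of a m] assms by (simp add: M_def)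
  have "a / 2 * ((1 + a) ^ m - (1 - a\<^sup>2) ^ m) \<le> a / 2 * (12/10 * (M * a))"
    using S Y small assms(1) by (intro mult_left_mono) auto
  then show ?thesis
    unfolding drift_margin_def M_def[symmetric] using S small by (simp add: power2_eq_square)
qed

lemma drift_margin_one_step:
  assumes "0 \<le> a" "a \<le> 1/2"
  shows "a\<^sup>2 / 4 \<le> drift_margin a 1"
proof -
  have "drift_margin a 1 = a\<^sup>2 / 2 - a\<^sup>2 * a / 2"
    by (simp add: drift_margin_def power2_eq_square algebra_simps)
  then show ?thesis
    using mult_left_mono[OF assms(2) zero_le_power2[of a]] by linarith
qed

text \<open>In one epoch a level \<open>l\<close> loses at most \<open>l (\<eta> N + m (\<eta> r)\<^sup>2)\<close>, through the shrinking steps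
  and the second-order effect of the pairs, while the pairs gain at least
  \<open>\<nu> / r * m (\<eta> r)\<^sup>2 / 4\<close> (see \<open>attract_shrink_repel_ge\<close>); at this level the gain wins.\<close>
lemma sustainable_level_bound:
  assumes "0 < N" "0 < r" "0 \<le> \<nu>" "0 \<le> h" "h \<le> \<eta>" "0 \<le> \<theta>" "4 * (1 + \<theta>) \<le> k"
    and "real m * h * r\<^sup>2 \<le> \<theta> * N"
  shows "\<nu> * real m * h * r / (k * N) * (\<eta> * N + real m * (\<eta> * r)\<^sup>2) \<le> \<nu> / r * (real m * (\<eta> * r)\<^sup>2 / 4)"
proof -
  define B where "B = \<nu> * real m * r * \<eta>\<^sup>2"
  have k: "0 < k" using assms(6,7) by (simp add: algebra_simps)
  have B: "0 \<le> B" using assms by (simp add: B_def)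
  have "\<nu> * real m * h * r / (k * N) * (\<eta> * N) = \<nu> * real m * r * \<eta> * h / k"
    using assms(1) by (simp add: field_simps)
  also have "\<dots> \<le> \<nu> * real m * r * \<eta> * \<eta> / k"
    using assms k by (intro divide_right_mono mult_left_mono) auto
  also have "\<dots> = B / k"
    by (simp add: B_def power2_eq_square)
  finally have t1: "\<nu> * real m * h * r / (k * N) * (\<eta> * N) \<le> B / k" .
  have "\<nu> * real m * h * r / (k * N) * (real m * (\<eta> * r)\<^sup>2) = B / (k * N) * (real m * h * r\<^sup>2)"
    by (simp add: B_def power2_eq_square field_simps)
  also have "\<dots> \<le> B / (k * N) * (\<theta> * N)"
    using assms(1,8) k B by (intro mult_left_mono) auto
  finally have t2: "\<nu> * real m * h * r / (k * N) * (real m * (\<eta> * r)\<^sup>2) \<le> B * \<theta> / k"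
    using assms(1) by simp
  have "\<nu> * real m * h * r / (k * N) * (\<eta> * N + real m * (\<eta> * r)\<^sup>2)
      = \<nu> * real m * h * r / (k * N) * (\<eta> * N) + \<nu> * real m * h * r / (k * N) * (real m * (\<eta> * r)\<^sup>2)"
    by (rule distrib_left)
  also have "\<dots> \<le> B / k + B * \<theta> / k"
    using t1 t2 by (rule add_mono)
  also have "\<dots> = B * (1 + \<theta>) / k"
    by (simp add: add_divide_distrib algebra_simps)
  also have "\<dots> \<le> B / 4"
    using mult_left_mono[OF assms(7) B] k by (simp add: field_simps)
  also have "\<dots> = \<nu> / r * (real m * (\<eta> * r)\<^sup>2 / 4)"
    using assms(2) by (simp add: B_def power2_eq_square field_simps)
  finally show ?thesis .
qed

lemma sgd_epoch_nth_unshifted: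
  assumes "p permutes {0..<n}" and "\<And>i. i < n \<Longrightarrow> A i j = (if P i then c else 0) \<and> B i j = 0"
  shows "sgd_epoch n (\<lambda>i. sep_quad_grad (A i) (B i)) \<eta> p x $ j = (1 - \<eta> * c) ^ card {i. i < n \<and> P i} * x $ j"
proof -
  have "foldl (\<lambda>t i. sgd_step \<eta> (A i j) (B i j) t) (x $ j) (map p [0..<n])
      = foldl (\<lambda>t i. sgd_step \<eta> (if P i then c else 0) 0 t) (x $ j) (map p [0..<n])"
    using assms(2) permutes_image[OF assms(1)] by (intro foldl_cong) auto
  also have "\<dots> = (1 - \<eta> * c) ^ card {i. i < n \<and> P i} * x $ j"
    unfolding foldl_sgd_step_unshifted length_filter_permutes[OF assms(1)] ..
  finally show ?thesis
    unfolding sgd_epoch_sep_quad_nth .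
qed

lemma sgd_start_move_nth_ge:
  fixes A B :: "nat \<Rightarrow> 'n::finite \<Rightarrow> real"
  assumes perms: "\<forall>k\<in>{1..K}. \<sigma> k permutes {0..<n}"
    and coeffs: "\<And>i. i < n \<Longrightarrow> A i j = move_curvature r z (mv i) \<and> B i j = move_shift \<nu> (mv i)"
    and step_size: "0 \<le> \<eta>" "0 \<le> r" "\<eta> * r \<le> 1" "\<eta> * z \<le> 1"
    and "0 \<le> z * \<nu>" and "move_count n mv Repel = move_count n mv Attract"
    and level: "l \<le> attract_shrink_repel \<eta> r z \<nu> (move_count n mv Attract) (move_count n mv Shrink) l"
    and "l \<le> x0 $ j" and "k \<le> K"
  shows "l \<le> sgd_start n (\<lambda>i. sep_quad_grad (A i) (B i)) \<eta> \<sigma> x0 k $ j"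
proof (rule sgd_start_invariant[where P = "\<lambda>x. l \<le> x $ j"])
  fix k' :: nat and x :: "real^'n"
  assume "k' < K" "l \<le> x $ j"
  then have "\<sigma> (Suc k') permutes {0..<n}"
    using perms by simp
  from sgd_epoch_move_nth_ge[where A = A and B = B and mv = mv, OF this coeffs step_size assms(7,8)] level \<open>l \<le> x $ j\<close>
    monoD[OF mono_attract_shrink_repel[OF step_size]]
  show "l \<le> sgd_epoch n (\<lambda>i. sep_quad_grad (A i) (B i)) \<eta> (\<sigma> (Suc k')) x $ j"
    by (meson order_trans)
qed (use \<open>l \<le> x0 $ j\<close> \<open>k \<le> K\<close> in simp_all)

lemma weighted_average_nth_ge:
  fixes X :: "nat \<Rightarrow> real^'n"
  assumes "finite I" and "\<forall>k\<in>I. 0 \<le> \<alpha> k" and "\<exists>k\<in>I. \<alpha> k \<noteq> 0" and "\<forall>k\<in>I. l \<le> X k $ j"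
  shows "l \<le> ((1 / sum \<alpha> I) *\<^sub>R (\<Sum>k\<in>I. \<alpha> k *\<^sub>R X k)) $ j"
proof -
  have "0 < sum \<alpha> I"
    using assms(1-3) by (metis order_le_neq_trans sum_nonneg sum_nonneg_0)
  moreover have "sum \<alpha> I * l \<le> (\<Sum>k\<in>I. \<alpha> k * X k $ j)"
    unfolding sum_distrib_right using assms(2,4) by (intro sum_mono mult_left_mono) auto
  ultimately show ?thesis
    by (simp add: sum_component pos_le_divide_eq mult.commute)
qed

section \<open>The hard instance\<close>

locale hard_instance =
  fixes n :: nat and L \<mu> \<nu> :: real and K :: nat
  assumes n_ge: "104 \<le> n" and \<mu>_pos: "0 < \<mu>" and \<nu>_pos: "0 < \<nu>"
    and condition_number: "8 * real n \<le> L / \<mu>"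
    and K_ge: "max ((L / \<mu>)\<^sup>2 / real n) ((L / \<mu>) powr (3/2) * sqrt (real n)) \<le> real K"
begin

definition pairs :: nat where "pairs = (n - 2) div 2"

text \<open>An even number of components, so that \<open>(1 - \<eta> L) ^ n_even \<ge> 1\<close> once \<open>\<eta> L \<ge> 2\<close>.\<close>
definition n_even :: nat where "n_even = 2 * (n div 2)"

text \<open>Step sizes up to \<open>\<eta>\<^sub>1\<close> are defeated by coordinate 1, those in \<open>[\<eta>\<^sub>1, \<eta>\<^sub>2]\<close> by
  coordinate 2, those in \<open>[\<eta>\<^sub>2, 2 / L]\<close> by coordinate 3 and larger ones by coordinate 4.
  The second term in \<open>\<mu>\<^sub>3\<close> makes \<open>\<eta>\<^sub>2 (L / 4)\<^sup>2 \<le> n \<mu>\<^sub>3\<close>, which the level \<open>l\<^sub>3\<close> needs.\<close>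
definition \<eta>\<^sub>1 :: real where "\<eta>\<^sub>1 = 1 / (2 * \<mu> * real n * real K)"
definition \<eta>\<^sub>2 :: real where "\<eta>\<^sub>2 = 1 / (10 * real pairs * (L / 4))"
definition \<mu>\<^sub>3 :: real where "\<mu>\<^sub>3 = max \<mu> (\<eta>\<^sub>2 * (L / 4)\<^sup>2 / real n)"

definition z\<^sub>2 :: real where "z\<^sub>2 = real n * \<mu> / real (n - 2 * pairs)"
definition z\<^sub>3 :: real where "z\<^sub>3 = real n * \<mu>\<^sub>3 / real (n - 2)"

definition move\<^sub>2 :: "nat \<Rightarrow> move" where
  "move\<^sub>2 i = (if i < pairs then Attract else if i < 2 * pairs then Repel else Shrink)"
definition move\<^sub>3 :: "nat \<Rightarrow> move" where
  "move\<^sub>3 i = (if i = 2 * pairs then Attract else if i = 2 * pairs + 1 then Repel else Shrink)"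

definition curv :: "nat \<Rightarrow> 4 \<Rightarrow> real" where
  "curv i j = (if j = 1 then \<mu>
     else if j = 2 then move_curvature (L / 4) z\<^sub>2 (move\<^sub>2 i)
     else if j = 3 then move_curvature (L / 4) z\<^sub>3 (move\<^sub>3 i)
     else if i < n_even then L else 0)"

definition shift :: "nat \<Rightarrow> 4 \<Rightarrow> real" where
  "shift i j = (if j = 2 then move_shift \<nu> (move\<^sub>2 i) else if j = 3 then move_shift \<nu> (move\<^sub>3 i) else 0)"

text \<open>Both levels have the form \<open>\<nu> m h r / (k n \<mu>\<^sub>j)\<close> of \<open>sustainable_level_bound\<close>, with
  \<open>h\<close> the smallest step size of the range and \<open>\<mu>\<^sub>j\<close> the mean curvature of the coordinate.\<close>
definition l\<^sub>2 :: real where "l\<^sub>2 = \<nu> * real pairs * \<eta>\<^sub>1 * (L / 4) / (5 * (real n * \<mu>))"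
definition l\<^sub>3 :: real where "l\<^sub>3 = \<nu> * \<eta>\<^sub>2 * (L / 4) / (8 * (real n * \<mu>\<^sub>3))"

definition x\<^sub>0 :: "real^4" where "x\<^sub>0 = (\<chi> j. if j = 3 then l\<^sub>3 else l\<^sub>2)"

abbreviation F :: "nat \<Rightarrow> real^4 \<Rightarrow> real" where "F i \<equiv> sep_quad (curv i) (shift i)"
abbreviation G :: "nat \<Rightarrow> real^4 \<Rightarrow> real^4" where "G i \<equiv> sep_quad_grad (curv i) (shift i)"

lemma pairs_bounds: "1 \<le> pairs" "2 * pairs + 2 \<le> n" "n \<le> 3 * pairs"
  using n_ge unfolding pairs_def by linarith+

lemma n_even_bounds: "1 \<le> n_even" "n_even \<le> n"
  using n_ge unfolding n_even_def by auto

lemma L_ge: "8 * real n * \<mu> \<le> L"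
  using condition_number \<mu>_pos by (simp add: field_simps)

lemma L_pos: "0 < L"
proof -
  have "0 < 8 * real n * \<mu>"
    using n_ge \<mu>_pos by simp
  then show ?thesis using L_ge by linarith
qed

lemma K_ge_square: "(L / \<mu>)\<^sup>2 / real n \<le> real K"
  using K_ge by simp

lemma K_pos: "0 < real K"
proof -
  have "0 < (L / \<mu>)\<^sup>2 / real n"
    using L_pos \<mu>_pos n_ge by simp
  then show ?thesis using K_ge_square by linarith
qed

lemma K_squared_ge: "(L / \<mu>) ^ 3 * real n \<le> (real K)\<^sup>2"
proof -
  have "((L / \<mu>) powr (3/2))\<^sup>2 = (L / \<mu>) powr 3"
    by (simp add: power2_eq_square flip: powr_add)
  also have "\<dots> = (L / \<mu>) ^ 3"
    using L_pos \<mu>_pos by (simp add: powr_realpow)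
  finally have "((L / \<mu>) powr (3/2) * sqrt (real n))\<^sup>2 = (L / \<mu>) ^ 3 * real n"
    by (simp add: power_mult_distrib)
  moreover have "((L / \<mu>) powr (3/2) * sqrt (real n))\<^sup>2 \<le> (real K)\<^sup>2"
    using K_ge by (intro power_mono) auto
  ultimately show ?thesis by simp
qed

lemma move\<^sub>2_counts:
  "move_count n move\<^sub>2 Attract = pairs" "move_count n move\<^sub>2 Repel = pairs"
  "move_count n move\<^sub>2 Shrink = n - 2 * pairs"
proof -
  have "{i. i < n \<and> move\<^sub>2 i = Attract} = {..<pairs}" "{i. i < n \<and> move\<^sub>2 i = Repel} = {pairs..<2 * pairs}"
    "{i. i < n \<and> move\<^sub>2 i = Shrink} = {2 * pairs..<n}"
    using pairs_bounds by (auto simp: move\<^sub>2_def)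
  then show "move_count n move\<^sub>2 Attract = pairs" "move_count n move\<^sub>2 Repel = pairs"
    "move_count n move\<^sub>2 Shrink = n - 2 * pairs"
    unfolding move_count_def by simp_all
qed

lemma move\<^sub>3_counts:
  "move_count n move\<^sub>3 Attract = 1" "move_count n move\<^sub>3 Repel = 1" "move_count n move\<^sub>3 Shrink = n - 2"
proof -
  have "{i. i < n \<and> move\<^sub>3 i = Attract} = {2 * pairs}" "{i. i < n \<and> move\<^sub>3 i = Repel} = {2 * pairs + 1}"
    "{i. i < n \<and> move\<^sub>3 i = Shrink} = {..<n} - {2 * pairs, 2 * pairs + 1}"
    using pairs_bounds by (auto simp: move\<^sub>3_def)
  then show "move_count n move\<^sub>3 Attract = 1" "move_count n move\<^sub>3 Repel = 1"
    "move_count n move\<^sub>3 Shrink = n - 2"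
    unfolding move_count_def using pairs_bounds by (simp_all add: card_Diff_subset)
qed

lemma \<mu>\<^sub>3_bounds: "\<mu> \<le> \<mu>\<^sub>3" "real n * \<mu>\<^sub>3 \<le> L / 8"
proof -
  have "\<eta>\<^sub>2 * (L / 4)\<^sup>2 = L / (40 * real pairs)"
    using pairs_bounds L_pos by (simp add: \<eta>\<^sub>2_def power2_eq_square field_simps)
  also have "\<dots> \<le> L / 8"
    using pairs_bounds L_pos by (intro divide_left_mono) auto
  finally have "real n * (\<eta>\<^sub>2 * (L / 4)\<^sup>2 / real n) \<le> L / 8"
    using n_ge by simp
  then show "\<mu> \<le> \<mu>\<^sub>3" "real n * \<mu>\<^sub>3 \<le> L / 8"
    using L_ge by (auto simp: \<mu>\<^sub>3_def max_def)
qed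

lemma z_bounds: "0 \<le> z\<^sub>2" "z\<^sub>2 \<le> L / 8" "0 \<le> z\<^sub>3" "z\<^sub>3 \<le> L / 8"
proof -
  have "z\<^sub>2 \<le> real n * \<mu> / 1" "z\<^sub>3 \<le> real n * \<mu>\<^sub>3 / 1"
    unfolding z\<^sub>2_def z\<^sub>3_def using pairs_bounds \<mu>_pos \<mu>\<^sub>3_bounds(1)
    by (intro divide_left_mono; simp)+
  then show "z\<^sub>2 \<le> L / 8" "z\<^sub>3 \<le> L / 8"
    using L_ge \<mu>\<^sub>3_bounds by simp_all
  show "0 \<le> z\<^sub>2" "0 \<le> z\<^sub>3"
    unfolding z\<^sub>2_def z\<^sub>3_def using \<mu>_pos \<mu>\<^sub>3_bounds(1) by simp_all
qed

lemma avg_shift: "avg_fun n shift = (\<lambda>_. 0)"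
proof
  fix j :: 4
  have "(\<Sum>i<n. shift i j) = 0"
    using exhaust_4[of j]
    by (auto simp: shift_def sum_move_shift move\<^sub>2_counts move\<^sub>3_counts)
  then show "avg_fun n shift j = 0"
    by (simp add: avg_fun_def)
qed

lemma avg_curv:
  "avg_fun n curv j = (if j = 3 then \<mu>\<^sub>3 else if j = 4 then real n_even * L / real n else \<mu>)"
proof -
  have "(\<Sum>i<n. curv i j) = real n * (if j = 3 then \<mu>\<^sub>3 else if j = 4 then real n_even * L / real n else \<mu>)"
  proof -
    have "{..<n} \<inter> {i. i < n_even} = {..<n_even}"
      using n_even_bounds by auto
    then have "(\<Sum>i<n. if i < n_even then L else 0) = real n_even * L"
      by (simp add: sum.If_cases)
    moreover have "real (n - 2 * pairs) * z\<^sub>2 = real n * \<mu>" "real (n - 2) * z\<^sub>3 = real n * \<mu>\<^sub>3"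
      using pairs_bounds by (simp_all add: z\<^sub>2_def z\<^sub>3_def)
    ultimately show ?thesis
      using exhaust_4[of j] n_ge
      by (auto simp: curv_def sum_move_curvature move\<^sub>2_counts move\<^sub>3_counts mult.commute)
  qed
  then show ?thesis
    using n_ge by (simp add: avg_fun_def)
qed

lemma small_curvatures: "\<mu> \<le> L / 8" "\<mu>\<^sub>3 \<le> L / 8"
proof -
  have "1 * \<mu> \<le> real n * \<mu>" "1 * \<mu>\<^sub>3 \<le> real n * \<mu>\<^sub>3"
    using n_ge \<mu>_pos \<mu>\<^sub>3_bounds(1) by (intro mult_right_mono; simp)+
  then show "\<mu> \<le> L / 8" "\<mu>\<^sub>3 \<le> L / 8"
    using \<mu>\<^sub>3_bounds(2) L_ge by simp_all
qed

lemma avg_curv_bounds: "\<mu> \<le> avg_fun n curv j" "avg_fun n curv j \<le> L"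
proof -
  have "real n * \<mu> \<le> 1 * L" "1 * L \<le> real n_even * L" "real n_even * L \<le> real n * L"
    using n_even_bounds L_ge L_pos by (simp_all add: mult_right_mono)
  then have "\<mu> \<le> real n_even * L / real n" "real n_even * L / real n \<le> L"
    using n_ge by (simp_all add: field_simps)
  then show "\<mu> \<le> avg_fun n curv j" "avg_fun n curv j \<le> L"
    using \<mu>\<^sub>3_bounds(1) small_curvatures L_pos by (simp_all add: avg_curv)
qed

lemma avg_curv_nonneg: "0 \<le> avg_fun n curv j"
  using avg_curv_bounds(1)[of j] \<mu>_pos by linarith

lemma avg_fun_F: "avg_fun n F = sep_quad (avg_fun n curv) (\<lambda>_. 0)"
  using avg_fun_sep_quad[of n curv shift] avg_shift by auto

lemma curv_bounds: "\<bar>curv i j\<bar> \<le> L" "\<bar>curv i j - avg_fun n curv j\<bar> \<le> L"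
proof -
  have "curv i j = avg_fun n curv j \<or> (curv i j = 0 \<or> curv i j = L)
      \<or> (\<bar>curv i j\<bar> \<le> L / 4 \<and> avg_fun n curv j \<le> L / 8)"
    using exhaust_4[of j] z_bounds small_curvatures L_pos
    by (cases "move\<^sub>2 i"; cases "move\<^sub>3 i") (auto simp: curv_def avg_curv)
  then show "\<bar>curv i j\<bar> \<le> L" "\<bar>curv i j - avg_fun n curv j\<bar> \<le> L"
    using avg_curv_bounds[of j] \<mu>_pos L_pos by auto
qed

lemma norm_shift: "norm (vec_lambda (shift i)) \<le> \<nu>"
proof -
  have "shift i 2 = 0 \<or> shift i 3 = 0"
    by (auto simp: shift_def move\<^sub>2_def move\<^sub>3_def)
  moreover have "(move_shift \<nu> M)\<^sup>2 \<le> \<nu>\<^sup>2" for M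
    by (cases M) auto
  then have "(shift i 2)\<^sup>2 \<le> \<nu>\<^sup>2" "(shift i 3)\<^sup>2 \<le> \<nu>\<^sup>2"
    by (simp_all add: shift_def)
  ultimately have "sqrt ((shift i 2)\<^sup>2 + (shift i 3)\<^sup>2) \<le> sqrt (\<nu>\<^sup>2)"
    by (intro real_sqrt_le_mono) auto
  then show ?thesis
    unfolding norm_vec_def L2_set_def using \<nu>_pos by (simp add: sum_4 shift_def)
qed

lemma in_PL_class_hard: "in_PL_class n F G L \<mu> (L / \<mu>) \<nu>"
  using avg_shift \<mu>_pos avg_curv_bounds(1) curv_bounds norm_shift by (rule in_PL_class_sep_quad)

lemma \<eta>_pos: "0 < \<eta>\<^sub>1" "0 < \<eta>\<^sub>2"
  using \<mu>_pos n_ge K_pos pairs_bounds L_pos by (simp_all add: \<eta>\<^sub>1_def \<eta>\<^sub>2_def)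

lemma level_pos: "0 < l\<^sub>2" "0 < l\<^sub>3"
  using \<nu>_pos pairs_bounds \<eta>_pos L_pos n_ge \<mu>_pos \<mu>\<^sub>3_bounds(1) by (simp_all add: l\<^sub>2_def l\<^sub>3_def)

text \<open>This is where \<open>K \<ge> (L / \<mu>)\<^sup>2 / n\<close> enters.\<close>
lemma pairs_\<eta>\<^sub>1_bound: "real pairs * \<eta>\<^sub>1 * (L / 4)\<^sup>2 \<le> 1/4 * (real n * \<mu>)"
proof -
  have "real pairs * \<eta>\<^sub>1 * (L / 4)\<^sup>2 \<le> real n / 2 * \<eta>\<^sub>1 * (L / 4)\<^sup>2"
    using pairs_bounds \<eta>_pos by (intro mult_right_mono) auto
  also have "\<dots> = L\<^sup>2 / (64 * \<mu> * real K)"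
    using n_ge \<mu>_pos by (simp add: \<eta>\<^sub>1_def power2_eq_square field_simps)
  also have "\<dots> \<le> L\<^sup>2 / (64 * \<mu> * ((L / \<mu>)\<^sup>2 / real n))"
    using K_ge_square K_pos \<mu>_pos L_pos n_ge by (intro divide_left_mono mult_left_mono mult_pos_pos) auto
  also have "\<dots> = real n * \<mu> / 64"
    using \<mu>_pos L_pos by (simp add: power2_eq_square field_simps)
  also have "\<dots> \<le> 1/4 * (real n * \<mu>)"
    using n_ge \<mu>_pos by simp
  finally show ?thesis .
qed

lemma moderate_step_bounds:
  assumes "\<eta>\<^sub>1 \<le> \<eta>" "\<eta> \<le> \<eta>\<^sub>2"
  shows "0 \<le> \<eta>" "real pairs * (\<eta> * (L / 4)) \<le> 1/10" "\<eta> * (L / 4) \<le> 1" "0 \<le> \<eta> * z\<^sub>2" "\<eta> * z\<^sub>2 \<le> 1"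
proof -
  show \<eta>: "0 \<le> \<eta>" and pairs_step: "real pairs * (\<eta> * (L / 4)) \<le> 1/10"
    using assms \<eta>_pos pairs_bounds L_pos mult_left_mono[OF assms(2), of "real pairs * (L / 4)"]
    by (auto simp: \<eta>\<^sub>2_def field_simps)
  have "1 * (\<eta> * (L / 4)) \<le> real pairs * (\<eta> * (L / 4))"
    using pairs_bounds \<eta> L_pos by (intro mult_right_mono) auto
  then show step: "\<eta> * (L / 4) \<le> 1"
    using pairs_step by linarith
  have "\<eta> * z\<^sub>2 \<le> \<eta> * (L / 4)"
    using z_bounds L_pos \<eta> by (intro mult_left_mono) auto
  then show "0 \<le> \<eta> * z\<^sub>2" "\<eta> * z\<^sub>2 \<le> 1"
    using z_bounds \<eta> step by (simp, linarith)
qed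

lemma large_step_bounds:
  assumes "\<eta>\<^sub>2 \<le> \<eta>" "\<eta> \<le> 2 / L"
  shows "0 \<le> \<eta>" "\<eta> * (L / 4) \<le> 1/2" "\<eta> * (L / 4) \<le> 1" "0 \<le> \<eta> * z\<^sub>3" "\<eta> * z\<^sub>3 \<le> 1"
proof -
  show \<eta>: "0 \<le> \<eta>" and step: "\<eta> * (L / 4) \<le> 1/2"
    using assms \<eta>_pos L_pos mult_right_mono[OF assms(2), of "L / 4"] by auto
  then show "\<eta> * (L / 4) \<le> 1" by linarith
  have "\<eta> * z\<^sub>3 \<le> \<eta> * (L / 4)"
    using z_bounds L_pos \<eta> by (intro mult_left_mono) auto
  then show "0 \<le> \<eta> * z\<^sub>3" "\<eta> * z\<^sub>3 \<le> 1"
    using z_bounds \<eta> step by (simp, linarith)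
qed

lemma level\<^sub>2:
  assumes "\<eta>\<^sub>1 \<le> \<eta>" "\<eta> \<le> \<eta>\<^sub>2"
  shows "l\<^sub>2 \<le> attract_shrink_repel \<eta> (L / 4) z\<^sub>2 \<nu> pairs (n - 2 * pairs) l\<^sub>2"
proof -
  note \<eta> = moderate_step_bounds(1)[OF assms] and pairs_step = moderate_step_bounds(2)[OF assms]
    and step = moderate_step_bounds(3)[OF assms] and z = moderate_step_bounds(4,5)[OF assms]
  have shrink: "real (n - 2 * pairs) * (\<eta> * z\<^sub>2) = \<eta> * (real n * \<mu>)"
    using pairs_bounds by (simp add: z\<^sub>2_def)
  have "real (n - 2 * pairs) * (\<eta> * z\<^sub>2) \<le> \<eta> * (L / 4) / 2"
    unfolding shrink using L_ge mult_left_mono[of "real n * \<mu>" "L / 8" \<eta>] \<eta> by simp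
  moreover have "real pairs * (\<eta> * (L / 4))\<^sup>2 / 4 \<le> drift_margin (\<eta> * (L / 4)) pairs"
    using \<eta> pairs_step pairs_bounds L_pos by (intro drift_margin_many_steps) auto
  moreover have "l\<^sub>2 * (real (n - 2 * pairs) * (\<eta> * z\<^sub>2) + real pairs * (\<eta> * (L / 4))\<^sup>2)
      \<le> \<nu> / (L / 4) * (real pairs * (\<eta> * (L / 4))\<^sup>2 / 4)"
    using sustainable_level_bound[of "real n * \<mu>" "L / 4" \<nu> \<eta>\<^sub>1 \<eta> "1/4" 5 pairs]
      n_ge \<mu>_pos L_pos \<nu>_pos \<eta>_pos assms(1) pairs_\<eta>\<^sub>1_bound
    unfolding shrink l\<^sub>2_def by simp
  ultimately show ?thesis
    using attract_shrink_repel_ge[of "L / 4" \<nu> \<eta> z\<^sub>2 "n - 2 * pairs" pairs l\<^sub>2]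
      L_pos \<nu>_pos \<eta> step z level_pos(1) by simp
qed

lemma level\<^sub>3:
  assumes "\<eta>\<^sub>2 \<le> \<eta>" "\<eta> \<le> 2 / L"
  shows "l\<^sub>3 \<le> attract_shrink_repel \<eta> (L / 4) z\<^sub>3 \<nu> 1 (n - 2) l\<^sub>3"
proof -
  note \<eta> = large_step_bounds(1)[OF assms] and step = large_step_bounds(2,3)[OF assms]
    and z = large_step_bounds(4,5)[OF assms]
  have shrink: "real (n - 2) * (\<eta> * z\<^sub>3) = \<eta> * (real n * \<mu>\<^sub>3)"
    using pairs_bounds by (simp add: z\<^sub>3_def)
  have "real (n - 2) * (\<eta> * z\<^sub>3) \<le> \<eta> * (L / 4) / 2"
    unfolding shrink using \<mu>\<^sub>3_bounds(2) mult_left_mono[of "real n * \<mu>\<^sub>3" "L / 8" \<eta>] \<eta> by simp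
  moreover have "real 1 * (\<eta> * (L / 4))\<^sup>2 / 4 \<le> drift_margin (\<eta> * (L / 4)) 1"
    using \<eta> step L_pos drift_margin_one_step[of "\<eta> * (L / 4)"] by simp
  moreover have "real 1 * \<eta>\<^sub>2 * (L / 4)\<^sup>2 \<le> 1 * (real n * \<mu>\<^sub>3)"
    using n_ge by (simp add: \<mu>\<^sub>3_def max_def field_simps)
  then have "l\<^sub>3 * (real (n - 2) * (\<eta> * z\<^sub>3) + real 1 * (\<eta> * (L / 4))\<^sup>2)
      \<le> \<nu> / (L / 4) * (real 1 * (\<eta> * (L / 4))\<^sup>2 / 4)"
    using sustainable_level_bound[of "real n * \<mu>\<^sub>3" "L / 4" \<nu> \<eta>\<^sub>2 \<eta> 1 8 1]
      n_ge \<mu>_pos \<mu>\<^sub>3_bounds(1) L_pos \<nu>_pos \<eta>_pos assms(1)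
    unfolding shrink l\<^sub>3_def by simp
  ultimately show ?thesis
    using attract_shrink_repel_ge[of "L / 4" \<nu> \<eta> z\<^sub>3 "n - 2" 1 l\<^sub>3]
      L_pos \<nu>_pos \<eta> step z level_pos(2) by simp
qed

lemma iterates_nth_ge_small_steps:
  assumes perms: "\<forall>k\<in>{1..K}. \<sigma> k permutes {0..<n}" and \<eta>: "0 < \<eta>" "\<eta> \<le> \<eta>\<^sub>1" and "k \<le> K"
  shows "l\<^sub>2 / 2 \<le> sgd_start n G \<eta> \<sigma> x\<^sub>0 k $ 1"
proof -
  have "sgd_epoch n G \<eta> (\<sigma> (Suc k')) x $ 1 = (1 - \<eta> * \<mu>) ^ n * x $ 1" if "k' < K" for k' x
    using sgd_epoch_nth_unshifted[where P = "\<lambda>_. True" and A = curv and B = shift and j = 1]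
      perms that by (simp add: curv_def shift_def)
  then have iterate: "sgd_start n G \<eta> \<sigma> x\<^sub>0 k $ 1 = (1 - \<eta> * \<mu>) ^ (n * k) * l\<^sub>2"
    using sgd_start_nth_geometric[of K n G \<eta> \<sigma> 1 "(1 - \<eta> * \<mu>) ^ n" k x\<^sub>0] \<open>k \<le> K\<close>
    by (simp add: x\<^sub>0_def power_mult)
  have "real (n * k) \<le> real n * real K" "\<eta> * \<mu> \<le> \<eta>\<^sub>1 * \<mu>"
    using \<open>k \<le> K\<close> \<eta> \<mu>_pos by (simp_all add: mult_left_mono)
  then have "real (n * k) * (\<eta> * \<mu>) \<le> real n * real K * (\<eta>\<^sub>1 * \<mu>)"
    using \<eta> \<mu>_pos by (intro mult_mono) auto
  also have "\<dots> = 1/2"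
    using n_ge K_pos \<mu>_pos by (simp add: \<eta>\<^sub>1_def)
  finally have "1/2 \<le> 1 + real (n * k) * - (\<eta> * \<mu>)"
    by simp
  moreover have "\<eta> * \<mu> \<le> 1"
  proof -
    have "1 \<le> real n * real K"
      using n_ge K_pos by (simp add: Suc_le_eq flip: of_nat_mult)
    then have "\<eta>\<^sub>1 * \<mu> * 1 \<le> \<eta>\<^sub>1 * \<mu> * (real n * real K)"
      using \<eta>_pos(1) \<mu>_pos by (intro mult_left_mono) auto
    also have "\<dots> = 1/2"
      using n_ge K_pos \<mu>_pos by (simp add: \<eta>\<^sub>1_def)
    finally show ?thesis
      using \<open>\<eta> * \<mu> \<le> \<eta>\<^sub>1 * \<mu>\<close> by simp
  qed
  ultimately have "1/2 \<le> (1 - \<eta> * \<mu>) ^ (n * k)"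
    using Bernoulli_inequality[of "- (\<eta> * \<mu>)" "n * k"] by simp
  then have "1/2 * l\<^sub>2 \<le> (1 - \<eta> * \<mu>) ^ (n * k) * l\<^sub>2"
    using level_pos(1) by (intro mult_right_mono) auto
  then show ?thesis
    unfolding iterate by simp
qed

lemma iterates_nth_ge_moderate_steps:
  assumes perms: "\<forall>k\<in>{1..K}. \<sigma> k permutes {0..<n}" and \<eta>: "\<eta>\<^sub>1 \<le> \<eta>" "\<eta> \<le> \<eta>\<^sub>2" and "k \<le> K"
  shows "l\<^sub>2 \<le> sgd_start n G \<eta> \<sigma> x\<^sub>0 k $ 2"
proof (rule sgd_start_move_nth_ge[OF perms])
  show "0 \<le> \<eta>" "\<eta> * (L / 4) \<le> 1" "\<eta> * z\<^sub>2 \<le> 1"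
    using moderate_step_bounds[OF \<eta>] by simp_all
  show "l\<^sub>2 \<le> attract_shrink_repel \<eta> (L / 4) z\<^sub>2 \<nu> (move_count n move\<^sub>2 Attract) (move_count n move\<^sub>2 Shrink) l\<^sub>2"
    unfolding move\<^sub>2_counts using level\<^sub>2[OF \<eta>] .
qed (use assms z_bounds L_pos \<nu>_pos move\<^sub>2_counts in \<open>simp_all add: curv_def shift_def x\<^sub>0_def\<close>)

lemma iterates_nth_ge_large_steps:
  assumes perms: "\<forall>k\<in>{1..K}. \<sigma> k permutes {0..<n}" and \<eta>: "\<eta>\<^sub>2 \<le> \<eta>" "\<eta> \<le> 2 / L" and "k \<le> K"
  shows "l\<^sub>3 \<le> sgd_start n G \<eta> \<sigma> x\<^sub>0 k $ 3"
proof (rule sgd_start_move_nth_ge[OF perms])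
  show "0 \<le> \<eta>" "\<eta> * (L / 4) \<le> 1" "\<eta> * z\<^sub>3 \<le> 1"
    using large_step_bounds[OF \<eta>] by simp_all
  show "l\<^sub>3 \<le> attract_shrink_repel \<eta> (L / 4) z\<^sub>3 \<nu> (move_count n move\<^sub>3 Attract) (move_count n move\<^sub>3 Shrink) l\<^sub>3"
    unfolding move\<^sub>3_counts using level\<^sub>3[OF \<eta>] .
qed (use assms z_bounds L_pos \<nu>_pos move\<^sub>3_counts in \<open>simp_all add: curv_def shift_def x\<^sub>0_def\<close>)

lemma iterates_nth_ge_huge_steps:
  assumes perms: "\<forall>k\<in>{1..K}. \<sigma> k permutes {0..<n}" and \<eta>: "2 / L \<le> \<eta>" and "k \<le> K"
  shows "l\<^sub>2 \<le> sgd_start n G \<eta> \<sigma> x\<^sub>0 k $ 4"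
proof -
  have "{i. i < n \<and> i < n_even} = {..<n_even}"
    using n_even_bounds by auto
  then have card: "card {i. i < n \<and> i < n_even} = n_even"
    by simp
  have "sgd_epoch n G \<eta> (\<sigma> (Suc k')) x $ 4 = (1 - \<eta> * L) ^ n_even * x $ 4" if "k' < K" for k' x
    using sgd_epoch_nth_unshifted[where P = "\<lambda>i. i < n_even" and A = curv and B = shift and j = 4]
      perms that by (simp add: curv_def shift_def card)
  then have iterate: "sgd_start n G \<eta> \<sigma> x\<^sub>0 k $ 4 = ((1 - \<eta> * L) ^ n_even) ^ k * l\<^sub>2"
    using sgd_start_nth_geometric[of K n G \<eta> \<sigma> 4 "(1 - \<eta> * L) ^ n_even" k x\<^sub>0] \<open>k \<le> K\<close>
    by (simp add: x\<^sub>0_def)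
  have "1 \<le> \<eta> * L - 1"
    using \<eta> L_pos by (simp add: field_simps)
  then have "1 * 1 \<le> (1 - \<eta> * L)\<^sup>2"
    using mult_mono[of 1 "\<eta> * L - 1" 1 "\<eta> * L - 1"] by (simp add: power2_eq_square algebra_simps)
  then have "1 \<le> ((1 - \<eta> * L) ^ n_even) ^ k"
    unfolding n_even_def power_mult by (simp add: one_le_power)
  then have "1 * l\<^sub>2 \<le> ((1 - \<eta> * L) ^ n_even) ^ k * l\<^sub>2"
    using level_pos(1) by (intro mult_right_mono) auto
  then show ?thesis
    unfolding iterate by simp
qed

definition rate :: real where "rate = L\<^sup>2 * \<nu>\<^sup>2 / (\<mu> ^ 3 * (real n)\<^sup>2 * (real K)\<^sup>2)"

text \<open>This is where \<open>K \<ge> (L / \<mu>) powr (3/2) * sqrt n\<close> enters.\<close>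
lemma rate_le: "rate \<le> \<nu>\<^sup>2 / (L * (real n) ^ 3)"
proof -
  have pos: "0 < \<mu> ^ 3 * (real n)\<^sup>2 * ((L / \<mu>) ^ 3 * real n)"
    using \<mu>_pos L_pos n_ge by simp
  have "rate \<le> L\<^sup>2 * \<nu>\<^sup>2 / (\<mu> ^ 3 * (real n)\<^sup>2 * ((L / \<mu>) ^ 3 * real n))"
    unfolding rate_def using K_squared_ge K_pos \<mu>_pos L_pos n_ge pos
    by (intro divide_left_mono mult_left_mono mult_pos_pos) auto
  also have "\<dots> = \<nu>\<^sup>2 / (L * (real n) ^ 3)"
    using \<mu>_pos L_pos n_ge by (simp add: field_simps power2_eq_square power3_eq_cube)
  finally show ?thesis .
qed

lemma rate_le_level\<^sub>2: "rate / 115200 \<le> \<mu> * (l\<^sub>2 / 2)\<^sup>2 / 2"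
proof -
  define l where "l = \<nu> * L / (120 * \<mu>\<^sup>2 * real n * real K)"
  have "l = \<nu> * L * real n / (40 * \<mu>\<^sup>2 * (real n)\<^sup>2 * real K) / 3"
    using n_ge by (simp add: l_def power2_eq_square field_simps)
  also have "\<dots> \<le> \<nu> * L * (3 * real pairs) / (40 * \<mu>\<^sup>2 * (real n)\<^sup>2 * real K) / 3"
    using pairs_bounds \<nu>_pos L_pos \<mu>_pos K_pos n_ge
    by (intro divide_right_mono mult_left_mono) auto
  also have "\<dots> = l\<^sub>2"
    using \<mu>_pos n_ge K_pos by (simp add: l\<^sub>2_def \<eta>\<^sub>1_def power2_eq_square field_simps)
  finally have "l\<^sup>2 \<le> l\<^sub>2\<^sup>2"
    using \<nu>_pos L_pos \<mu>_pos K_pos n_ge by (intro power_mono) (auto simp: l_def)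
  moreover have "rate / 115200 = \<mu> * l\<^sup>2 / 8"
    using \<mu>_pos n_ge K_pos by (simp add: rate_def l_def power2_eq_square power3_eq_cube field_simps)
  ultimately show ?thesis
    using \<mu>_pos by (simp add: power_divide)
qed

lemma rate_le_level\<^sub>3: "rate / 115200 \<le> \<mu>\<^sub>3 * l\<^sub>3\<^sup>2 / 2"
proof -
  have \<mu>\<^sub>3: "0 < \<mu>\<^sub>3"
    using \<mu>_pos \<mu>\<^sub>3_bounds(1) by linarith
  have "real pairs ^ 2 * (real n)\<^sup>2 * \<mu>\<^sub>3 = real pairs ^ 2 * real n * (real n * \<mu>\<^sub>3)"
    by (simp add: power2_eq_square)
  also have "\<dots> \<le> (real n / 2) ^ 2 * real n * (L / 8)"
    using pairs_bounds \<mu>\<^sub>3_bounds(2) \<mu>\<^sub>3 by (intro mult_mono power_mono) auto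
  also have "\<dots> = 400 * (L * (real n) ^ 3) / 12800"
    by (simp add: power2_eq_square power3_eq_cube)
  finally have "12800 * real pairs ^ 2 * (real n)\<^sup>2 * \<mu>\<^sub>3 \<le> 400 * (L * (real n) ^ 3)"
    by (simp add: mult_ac)
  then have "\<nu>\<^sup>2 / (400 * (L * (real n) ^ 3)) \<le> \<nu>\<^sup>2 / (12800 * real pairs ^ 2 * (real n)\<^sup>2 * \<mu>\<^sub>3)"
    using pairs_bounds n_ge \<mu>\<^sub>3 L_pos by (intro divide_left_mono) auto
  also have "\<dots> = \<mu>\<^sub>3 * l\<^sub>3\<^sup>2 / 2"
    using pairs_bounds L_pos n_ge \<mu>\<^sub>3 by (simp add: l\<^sub>3_def \<eta>\<^sub>2_def power2_eq_square field_simps)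
  finally have "rate / 400 \<le> \<mu>\<^sub>3 * l\<^sub>3\<^sup>2 / 2"
    using rate_le by (simp add: field_simps)
  moreover have "0 \<le> rate"
    using \<mu>_pos by (simp add: rate_def)
  ultimately show ?thesis by simp
qed

lemma iterates_nth_ge:
  assumes perms: "\<forall>k\<in>{1..K}. \<sigma> k permutes {0..<n}" and "0 < \<eta>"
  obtains l j where "0 \<le> l" "\<And>k. k \<le> K \<Longrightarrow> l \<le> sgd_start n G \<eta> \<sigma> x\<^sub>0 k $ j"
    "rate / 115200 \<le> avg_fun n curv j / 2 * l\<^sup>2"
proof -
  have rate\<^sub>2: "rate / 115200 \<le> avg_fun n curv j / 2 * (l\<^sub>2 / 2)\<^sup>2" for j
    using rate_le_level\<^sub>2 mult_right_mono[OF avg_curv_bounds(1)[of j], of "(l\<^sub>2 / 2)\<^sup>2 / 2"] by simp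
  have half: "0 \<le> l\<^sub>2 / 2" "l\<^sub>2 / 2 \<le> l\<^sub>2"
    using level_pos by simp_all
  consider "\<eta> \<le> \<eta>\<^sub>1" | "\<eta>\<^sub>1 \<le> \<eta>" "\<eta> \<le> \<eta>\<^sub>2" | "\<eta>\<^sub>2 \<le> \<eta>" "\<eta> \<le> 2 / L" | "2 / L \<le> \<eta>"
    by linarith
  then show ?thesis
  proof cases
    case 1
    then show ?thesis
      using that[OF half(1) _ rate\<^sub>2] iterates_nth_ge_small_steps[OF perms \<open>0 < \<eta>\<close>] by blast
  next
    case 2
    then show ?thesis
      using that[OF half(1) _ rate\<^sub>2] iterates_nth_ge_moderate_steps[OF perms] half(2) order_trans by blast
  next
    case 3
    have "avg_fun n curv 3 = \<mu>\<^sub>3"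
      by (simp add: avg_curv)
    then show ?thesis
      using that[of l\<^sub>3 3] iterates_nth_ge_large_steps[OF perms 3] level_pos rate_le_level\<^sub>3
      by (simp add: mult.commute)
  next
    case 4
    then show ?thesis
      using that[OF half(1) _ rate\<^sub>2] iterates_nth_ge_huge_steps[OF perms] half(2) order_trans by blast
  qed
qed

lemma weighted_average_gap:
  assumes "\<forall>k\<in>{1..K}. \<sigma> k permutes {0..<n}" and "0 < \<eta>"
    and "\<forall>k\<in>{1..K+1}. 0 \<le> \<alpha> k" and "\<exists>k\<in>{1..K+1}. \<alpha> k \<noteq> 0"
  shows "avg_fun n F ((1 / (\<Sum>k=1..K+1. \<alpha> k)) *\<^sub>R (\<Sum>k=1..K+1. \<alpha> k *\<^sub>R sgd_start n G \<eta> \<sigma> x\<^sub>0 (k - 1)))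
      - (INF y. avg_fun n F y) \<ge> 1/115200 * (L\<^sup>2 * \<nu>\<^sup>2 / (\<mu>^3 * (real n)\<^sup>2 * (real K)\<^sup>2))"
proof -
  define x where "x = (1 / (\<Sum>k=1..K+1. \<alpha> k)) *\<^sub>R (\<Sum>k=1..K+1. \<alpha> k *\<^sub>R sgd_start n G \<eta> \<sigma> x\<^sub>0 (k - 1))"
  obtain l j where l: "0 \<le> l" "\<And>k. k \<le> K \<Longrightarrow> l \<le> sgd_start n G \<eta> \<sigma> x\<^sub>0 k $ j"
    and rate: "rate / 115200 \<le> avg_fun n curv j / 2 * l\<^sup>2"
    by (rule iterates_nth_ge[OF assms(1,2)]) (rule that)
  have "\<forall>k\<in>{1..K+1}. l \<le> sgd_start n G \<eta> \<sigma> x\<^sub>0 (k - 1) $ j"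
    using l(2) by auto
  then have "l \<le> x $ j"
    unfolding x_def using assms(3,4) by (intro weighted_average_nth_ge) simp_all
  then have "avg_fun n curv j / 2 * l\<^sup>2 \<le> avg_fun n curv j / 2 * (x $ j)\<^sup>2"
    using l(1) avg_curv_nonneg[of j] by (intro mult_left_mono power_mono) auto
  also have "\<dots> \<le> avg_fun n F x - (INF y. avg_fun n F y)"
    unfolding avg_fun_F INF_sep_quad[OF avg_curv_nonneg] using sep_quad_ge_coord[OF avg_curv_nonneg] by simp
  finally have "1/115200 * rate \<le> avg_fun n F x - (INF y. avg_fun n F y)"
    using rate by simp
  then show ?thesis
    unfolding x_def rate_def .
qed

end

theorem theorem9:
  shows "\<exists>c>0. \<forall>(n::nat) (L::real) (\<mu>::real) (\<nu>::real) (K::nat).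
    n \<ge> 104 \<and> L > 0 \<and> \<mu> > 0 \<and> \<nu> > 0 \<and> L / \<mu> \<ge> 8 * real n \<and>
    real K \<ge> max ((L / \<mu>)\<^sup>2 / real n) ((L / \<mu>) powr (3/2) * sqrt (real n)) \<longrightarrow>
    (\<exists>(f :: nat \<Rightarrow> real^4 \<Rightarrow> real) (g :: nat \<Rightarrow> real^4 \<Rightarrow> real^4) (x0 :: real^4).
       in_PL_class n f g L \<mu> (L / \<mu>) \<nu> \<and>
       (\<forall>(\<sigma> :: nat \<Rightarrow> nat \<Rightarrow> nat) (\<eta>::real) (\<alpha> :: nat \<Rightarrow> real).
          (\<forall>k\<in>{1..K}. \<sigma> k permutes {0..<n}) \<and> \<eta> > 0 \<and>
          (\<forall>k\<in>{1..K+1}. \<alpha> k \<ge> 0) \<and> (\<exists>k\<in>{1..K+1}. \<alpha> k \<noteq> 0) \<longrightarrow>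
          avg_fun n f ((1 / (\<Sum>k=1..K+1. \<alpha> k)) *\<^sub>R (\<Sum>k=1..K+1. \<alpha> k *\<^sub>R sgd_start n g \<eta> \<sigma> x0 (k - 1)))
            - (INF y. avg_fun n f y)
          \<ge> c * (L\<^sup>2 * \<nu>\<^sup>2 / (\<mu>^3 * (real n)\<^sup>2 * (real K)\<^sup>2))))"
proof (intro exI[of _ "1/115200 :: real"] conjI allI impI, goal_cases)
  case 1
  show ?case by simp
next
  case (2 n L \<mu> \<nu> K)
  then interpret hard_instance n L \<mu> \<nu> K
    by unfold_locales auto
  show ?case
    using in_PL_class_hard weighted_average_gap by blast
qed

end
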